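(* Let $\mathcal L$ be a finite distributive lattice and $i$ an integer, and let $\mathcal L_{i,i}=\{p\in\mathcal L:\operatorname{rank}p=i\}$. If $|\mathcal L_{i,i}|>1$, then the ideal $H_{\mathcal L_{i,i}}$ has no linear resolution.
   Context: A finite distributive lattice is graded, with rank function $\operatorname{rank}$ ($0$ at the minimum, increasing by $1$ along cover relations). Let $P$ be the set of join-irreducible elements of $\mathcal L$ (elements with exactly one lower neighbor); for $p\in\mathcal L$ put $\ell(p)=\{q\in P:q\le p\}$. Let $K$ be a field, $S=K[x_p,y_p:p\in P]$ with all variables of degree 1, $u_q=\prod_{p\in\ell(q)}x_p\prod_{p\in P\setminus\ell(q)}y_p$, and for $\mathcal S\subseteq\mathcal L$ let $H_{\mathcal S}=(u_q:q\in\mathcal S)$. A graded ideal has a linear resolution if all minimal generators have a common degree $d$ and the $i$-th module of its graded minimal free resolution is generated in degree $d+i$. *)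

theory Defs
  imports "HOL-Library.Poly_Mapping"
begin

definition covers :: "'a::order \<Rightarrow> 'a \<Rightarrow> bool" where
  "covers q p \<longleftrightarrow> q < p \<and> \<not> (\<exists>r. q < r \<and> r < p)"

text \<open>Rank: the length of a maximal chain from the minimum to p, i.e. the maximal
  number of elements of a chain strictly below p (0 at the minimum, +1 along covers
  in a graded poset).\<close>
definition lrank :: "'a::{finite,order} \<Rightarrow> nat" where
  "lrank p = Max {card C | C. C \<subseteq> {q. q < p} \<and> (\<forall>x\<in>C. \<forall>y\<in>C. x \<le> y \<or> y \<le> x)}"

definition join_irr :: "'a::{finite,order} set" where
  "join_irr = {p. card {q. covers q p} = 1}"

definition lideal :: "'a::{finite,order} \<Rightarrow> 'a set" where
  "lideal p = {q \<in> join_irr. q \<le> p}"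

text \<open>Polynomials over 'k in variables of type 'v: finitely supported maps from
  monomials (exponent vectors 'v \<Rightarrow>0 nat) to coefficients. Variables x_p = Inl p,
  y_p = Inr p.\<close>

type_synonym ('v, 'k) mpoly = "('v \<Rightarrow>\<^sub>0 nat) \<Rightarrow>\<^sub>0 'k"

definition Var :: "'v \<Rightarrow> ('v, 'k::field) mpoly" where
  "Var v = Poly_Mapping.single (Poly_Mapping.single v 1) 1"

definition mdeg :: "('v \<Rightarrow>\<^sub>0 nat) \<Rightarrow> nat" where
  "mdeg m = (\<Sum>v\<in>Poly_Mapping.keys m. Poly_Mapping.lookup m v)"

text \<open>Homogeneous of degree d (the zero polynomial is homogeneous of every degree).\<close>
definition homog :: "nat \<Rightarrow> ('v, 'k::field) mpoly \<Rightarrow> bool" where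
  "homog d f \<longleftrightarrow> (\<forall>m\<in>Poly_Mapping.keys f. mdeg m = d)"

definition polyring :: "'v set \<Rightarrow> ('v, 'k::field) mpoly set" where
  "polyring V = {f. \<forall>m\<in>Poly_Mapping.keys f. Poly_Mapping.keys m \<subseteq> V}"

definition ideal_gen :: "'v set \<Rightarrow> ('v, 'k::field) mpoly set \<Rightarrow> ('v, 'k) mpoly set" where
  "ideal_gen V G = {\<Sum>g\<in>G'. c g * g | G' c. finite G' \<and> G' \<subseteq> G \<and> (\<forall>g\<in>G'. c g \<in> polyring V)}"

text \<open>Free modules S^b are represented by vectors nat \<Rightarrow> poly with entries in S and
  vanishing at indices \<ge> b.  A differential F_i \<rightarrow> F_(i-1) is a matrix M (M j k is the
  j-th coordinate of the image of the k-th basis vector).\<close>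

definition fvecs :: "'v set \<Rightarrow> nat \<Rightarrow> (nat \<Rightarrow> ('v, 'k::field) mpoly) set" where
  "fvecs V b = {v. (\<forall>k. v k \<in> polyring V) \<and> (\<forall>k\<ge>b. v k = 0)}"

definition matmul :: "nat \<Rightarrow> (nat \<Rightarrow> nat \<Rightarrow> ('v, 'k::field) mpoly) \<Rightarrow> (nat \<Rightarrow> ('v, 'k) mpoly)
    \<Rightarrow> (nat \<Rightarrow> ('v, 'k) mpoly)" where
  "matmul b M v = (\<lambda>j. \<Sum>k<b. M j k * v k)"

text \<open>A graded ideal I of S = K[x_v : v \<in> V] has a linear resolution iff it has a
  graded free resolution
    ... \<rightarrow> F_2 \<rightarrow> F_1 \<rightarrow> F_0 \<rightarrow> I \<rightarrow> 0,  F_i = S(-d-i)^(b i),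
  i.e. F_0 \<rightarrow> I sends the basis vectors to homogeneous generators g_j of degree d,
  and the degree-preserving differentials F_i \<rightarrow> F_(i-1) (i \<ge> 1) are given by
  matrices of linear forms.  Such a resolution is automatically minimal (all matrix
  entries lie in the irrelevant maximal ideal), hence it is the graded minimal free
  resolution, and its i-th module is generated in degree d+i.  Conversely the
  minimal resolution of an ideal with linear resolution has this form.\<close>
definition has_linear_resolution :: "'v set \<Rightarrow> ('v, 'k::field) mpoly set \<Rightarrow> bool" where
  "has_linear_resolution V I \<longleftrightarrow>
    (\<exists>(d::nat) (b::nat \<Rightarrow> nat) (g::nat \<Rightarrow> ('v, 'k) mpoly)
        (M::nat \<Rightarrow> nat \<Rightarrow> nat \<Rightarrow> ('v, 'k) mpoly).
       (\<forall>j<b 0. g j \<in> polyring V \<and> homog d (g j)) \<and>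
       {\<Sum>j<b 0. v j * g j | v. v \<in> fvecs V (b 0)} = I \<and>
       (\<forall>i\<ge>1. \<forall>j k. M i j k \<in> polyring V \<and> homog 1 (M i j k)) \<and>
       {v \<in> fvecs V (b 0). (\<Sum>j<b 0. v j * g j) = 0}
          = (\<lambda>w. \<lambda>j. if j < b 0 then matmul (b 1) (M 1) w j else 0) ` fvecs V (b 1) \<and>
       (\<forall>i\<ge>1. {v \<in> fvecs V (b i). (\<forall>j<b (i - 1). matmul (b i) (M i) v j = 0)}
          = (\<lambda>w. \<lambda>j. if j < b i then matmul (b (Suc i)) (M (Suc i)) w j else 0)
              ` fvecs V (b (Suc i))))"

definition u_mon :: "'a::{finite,order} \<Rightarrow> ('a + 'a, 'k::field) mpoly" where
  "u_mon q = (\<Prod>p\<in>lideal q. Var (Inl p)) * (\<Prod>p\<in>join_irr - lideal q. Var (Inr p))"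

definition Svars :: "('a::{finite,order} + 'a) set" where
  "Svars = Inl ` join_irr \<union> Inr ` join_irr"

definition H_ideal :: "'a::{finite,order} set \<Rightarrow> ('a + 'a, 'k::field) mpoly set" where
  "H_ideal T = ideal_gen Svars (u_mon ` T)"

end

(*
  Two distinct elements p, q of the same rank have incomparable down-sets of
  join-irreducibles, so u_p exceeds u_q both in some x-variable and in some
  y-variable: lcm(u_p, u_q) has degree |P| + 2, and no two generators of H are
  joined by a linear syzygy.

  Now suppose H had a linear resolution with generators g_j. The g_j are then
  supported on the monomials u_q, so in a linear syzygy sum c_j g_j = 0 the
  coefficient of e * u_q only involves the e-coefficients of the c_j. These
  coefficients form a constant syzygy, which vanishes because the syzygies are
  generated by linear forms. Hence every linear syzygy is zero, the first
  differential is zero and the g_j are S-linearly independent. The Koszul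
  syzygies g_k e_j - g_j e_k then leave a single generator g, and the principal
  ideal (g) cannot contain two distinct monomials u_p, u_q.
*)

theory Submission
  imports Defs
begin

section \<open>Join-irreducibles and rank\<close>

lemma covers_exists_above:
  fixes x p :: "'a::{finite,order}"
  assumes "x < p"
  obtains c where "x \<le> c" "covers c p"
proof -
  let ?A = "{r. x \<le> r \<and> r < p}"
  have "finite ?A" "?A \<noteq> {}"
    using assms by auto
  then obtain c where c: "c \<in> ?A" and max: "\<forall>r\<in>?A. c \<le> r \<longrightarrow> c = r"
    by (meson finite_has_maximal)
  have "covers c p"
    unfolding covers_def
  proof (intro conjI notI)
    show "c < p" using c by simp
    assume "\<exists>r. c < r \<and> r < p"
    then obtain r where r: "c < r" "r < p" by blast
    then have "r \<in> ?A"
      using c order.trans[of x c r] by (simp add: less_imp_le)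
    then show False
      using max r(1) less_le by blast
  qed
  with c that show thesis by blast
qed

lemma sup_of_distinct_covers:
  fixes a b p :: "'a::lattice"
  assumes "covers a p" "covers b p" "a \<noteq> b"
  shows "sup a b = p"
proof (rule ccontr)
  assume "sup a b \<noteq> p"
  then have "sup a b < p"
    using assms(1,2) by (simp add: covers_def less_le)
  moreover have "a < sup a b \<or> b < sup a b"
    using assms(3) by (metis le_less sup_ge1 sup_ge2)
  ultimately show False
    using assms(1,2) by (auto simp: covers_def)
qed

lemma lideal_subset_imp_le:
  fixes p q :: "'a::{finite,lattice}"
  assumes "lideal p \<subseteq> lideal q"
  shows "p \<le> q"
  using assms
proof (induction "card {r. r < p}" arbitrary: p rule: less_induct)
  case less
  have below: "y \<le> q" if "y < p" for y
  proof (rule less.hyps)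
    show "card {r. r < y} < card {r. r < p}"
      using that by (intro psubset_card_mono) auto
    show "lideal y \<subseteq> lideal q"
      using less.prems that by (auto simp: lideal_def)
  qed
  show ?case
  proof (cases "p \<in> join_irr")
    case True
    then show ?thesis using less.prems by (auto simp: lideal_def)
  next
    case not_irr: False
    show ?thesis
    proof (cases "\<exists>x. x < p")
      case False
      then have "inf p q = p"
        using inf_le1[of p q] order.not_eq_order_implies_strict by blast
      then show ?thesis by (simp add: le_iff_inf)
    next
      case True
      then obtain a where a: "covers a p" using covers_exists_above by blast
      have "{c. covers c p} \<noteq> {a}" using not_irr by (auto simp: join_irr_def)
      with a obtain b where b: "covers b p" "b \<noteq> a" by blast
      have "a \<le> q" "b \<le> q"
        using below a b(1) by (auto simp: covers_def)
      moreover have "sup a b = p"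
        using sup_of_distinct_covers a b by blast
      ultimately show ?thesis
        using le_supI[of a q b] by simp
    qed
  qed
qed

lemma lrank_strict_mono:
  fixes p q :: "'a::{finite,order}"
  assumes "p < q"
  shows "lrank p < lrank q"
proof -
  define chain_cards where "chain_cards x =
      {card C | C. C \<subseteq> {r. r < x} \<and> (\<forall>x\<in>C. \<forall>y\<in>C. x \<le> y \<or> y \<le> x)}" for x :: 'a
  have lrank: "lrank x = Max (chain_cards x)" for x
    by (simp add: lrank_def chain_cards_def)
  have finite_chain_cards: "finite (chain_cards x)" for x
    by (rule finite_subset[of _ "card ` Pow UNIV"]) (auto simp: chain_cards_def)
  have "0 \<in> chain_cards p"
    unfolding chain_cards_def by (intro CollectI exI[of _ "{}"]) simp
  then have "lrank p \<in> chain_cards p"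
    unfolding lrank using finite_chain_cards by (intro Max_in) auto
  then obtain C where C: "lrank p = card C" "C \<subseteq> {r. r < p}"
      "\<forall>x\<in>C. \<forall>y\<in>C. x \<le> y \<or> y \<le> x"
    by (auto simp: chain_cards_def)
  have "card (insert p C) \<in> chain_cards q"
    unfolding chain_cards_def using C(2,3) assms
    by (intro CollectI exI[of _ "insert p C"]) (auto intro: less_trans less_imp_le)
  moreover have "card (insert p C) = Suc (lrank p)"
    using C(1,2) by (subst card_insert_disjoint) auto
  ultimately have "Suc (lrank p) \<le> Max (chain_cards q)"
    using Max_ge[OF finite_chain_cards] by simp
  then show ?thesis
    unfolding lrank by simp
qed

lemma lideal_not_subset_if_same_rank:
  fixes q q' :: "'a::{finite,lattice}"
  assumes "lrank q = lrank q'" "q \<noteq> q'"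
  shows "\<not> lideal q \<subseteq> lideal q'"
proof
  assume "lideal q \<subseteq> lideal q'"
  then have "q < q'"
    using assms(2) lideal_subset_imp_le by (simp add: less_le)
  then show False
    using lrank_strict_mono[of q q'] assms(1) by simp
qed

lemma mdeg_eq_sum_superset:
  assumes "finite S" "Poly_Mapping.keys m \<subseteq> S"
  shows "mdeg m = (\<Sum>v\<in>S. Poly_Mapping.lookup m v)"
  unfolding mdeg_def using assms by (intro sum.mono_neutral_left) (auto simp: in_keys_iff)

lemma mdeg_add [simp]: "mdeg (a + b) = mdeg a + mdeg b"
proof -
  let ?S = "Poly_Mapping.keys a \<union> Poly_Mapping.keys b"
  have "mdeg (a + b) = (\<Sum>v\<in>?S. Poly_Mapping.lookup (a + b) v)"
    using keys_add[of a b] by (intro mdeg_eq_sum_superset) auto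
  also have "\<dots> = (\<Sum>v\<in>?S. Poly_Mapping.lookup a v) + (\<Sum>v\<in>?S. Poly_Mapping.lookup b v)"
    by (simp add: lookup_add sum.distrib)
  also have "\<dots> = mdeg a + mdeg b"
    by (subst (1 2) mdeg_eq_sum_superset[of ?S]) auto
  finally show ?thesis .
qed

lemma mdeg_zero [simp]: "mdeg 0 = 0"
  by (simp add: mdeg_def)

lemma mdeg_sum: "mdeg (\<Sum>x\<in>A. f x) = (\<Sum>x\<in>A. mdeg (f x))"
  by (induction A rule: infinite_finite_induct) auto

lemma mdeg_single [simp]: "mdeg (Poly_Mapping.single v n) = n"
  by (simp add: mdeg_def)

lemma mdeg_eq_0_iff [simp]: "mdeg m = 0 \<longleftrightarrow> m = 0"
  by (auto simp: mdeg_def in_keys_iff poly_mapping_eqI)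

lemma mdeg_mono:
  assumes "\<And>v. Poly_Mapping.lookup m v \<le> Poly_Mapping.lookup m' v"
  shows "mdeg m \<le> mdeg m'"
proof -
  have "Poly_Mapping.keys m \<subseteq> Poly_Mapping.keys m'"
  proof
    fix v
    assume "v \<in> Poly_Mapping.keys m"
    then show "v \<in> Poly_Mapping.keys m'"
      using assms[of v] by (metis in_keys_iff le_zero_eq)
  qed
  then have "mdeg m = (\<Sum>v\<in>Poly_Mapping.keys m'. Poly_Mapping.lookup m v)"
    by (intro mdeg_eq_sum_superset) auto
  also have "\<dots> \<le> mdeg m'"
    unfolding mdeg_def by (intro sum_mono assms)
  finally show ?thesis .
qed

lemma lookup_add_lookup_le_mdeg:
  assumes "x \<noteq> y"
  shows "Poly_Mapping.lookup m x + Poly_Mapping.lookup m y \<le> mdeg m"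
proof -
  have "Poly_Mapping.lookup m x + Poly_Mapping.lookup m y = (\<Sum>v\<in>{x, y}. Poly_Mapping.lookup m v)"
    using assms by simp
  also have "\<dots> \<le> (\<Sum>v\<in>Poly_Mapping.keys m \<union> {x, y}. Poly_Mapping.lookup m v)"
    by (intro sum_mono2) auto
  also have "\<dots> = mdeg m"
    by (intro mdeg_eq_sum_superset[symmetric]) auto
  finally show ?thesis .
qed

lemma mdeg_diff_le_if_add_eq:
  assumes "a + m' = e + m"
  shows "mdeg (m - m') \<le> mdeg a"
proof (rule mdeg_mono)
  fix v
  have "Poly_Mapping.lookup a v + Poly_Mapping.lookup m' v
      = Poly_Mapping.lookup e v + Poly_Mapping.lookup m v"
    using arg_cong[OF assms, of "\<lambda>t. Poly_Mapping.lookup t v"] by (simp add: lookup_add)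
  then show "Poly_Mapping.lookup (m - m') v \<le> Poly_Mapping.lookup a v"
    by (simp add: lookup_minus)
qed

lemma lookup_mult_unique:
  fixes f g :: "('a::cancel_comm_monoid_add) \<Rightarrow>\<^sub>0 ('b::semiring_0)"
  assumes unique: "\<And>a b. a \<in> Poly_Mapping.keys f \<Longrightarrow> b \<in> Poly_Mapping.keys g \<Longrightarrow> a + b = a0 + b0
      \<Longrightarrow> a = a0 \<and> b = b0"
  shows "Poly_Mapping.lookup (f * g) (a0 + b0)
    = Poly_Mapping.lookup f a0 * Poly_Mapping.lookup g b0"
proof -
  have "Poly_Mapping.lookup f a * (\<Sum>b. Poly_Mapping.lookup g b when a0 + b0 = a + b)
      = (Poly_Mapping.lookup f a0 * Poly_Mapping.lookup g b0 when a = a0)" for a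
  proof (cases "a \<in> Poly_Mapping.keys f")
    case True
    have eq: "(\<lambda>b. Poly_Mapping.lookup g b when a0 + b0 = a + b)
        = (\<lambda>b. if b = b0 then (Poly_Mapping.lookup g b0 when a = a0) else 0)"
    proof
      fix b
      show "(Poly_Mapping.lookup g b when a0 + b0 = a + b)
          = (if b = b0 then (Poly_Mapping.lookup g b0 when a = a0) else 0)"
        using unique[OF True, of b]
        by (cases "b \<in> Poly_Mapping.keys g") (auto simp: in_keys_iff when_def)
    qed
    show ?thesis
      by (simp only: eq Sum_any.delta) (simp add: when_def)
  qed (auto simp: in_keys_iff when_def)
  then show ?thesis
    by (simp add: lookup_mult)
qed

lemma lookup_single_0_mult:
  "Poly_Mapping.lookup (Poly_Mapping.single 0 s * h) t = s * Poly_Mapping.lookup h t"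
  by (simp flip: mult_map_scale_conv_mult add: map.rep_eq when_def)

lemma lookup_homog_mult_0:
  assumes "homog e f" "0 < e"
  shows "Poly_Mapping.lookup (f * h) 0 = 0"
proof -
  have "0 \<notin> Poly_Mapping.keys (f * h)"
  proof
    assume "0 \<in> Poly_Mapping.keys (f * h)"
    then obtain a b where a: "a \<in> Poly_Mapping.keys f" and "0 = a + b"
      using keys_mult by blast
    then have "mdeg a + mdeg b = 0"
      by (metis mdeg_add mdeg_zero)
    moreover have "mdeg a = e"
      using assms(1) a by (simp add: homog_def)
    ultimately show False
      using assms(2) by simp
  qed
  then show ?thesis by (simp add: in_keys_iff)
qed

section \<open>Linear presentations of monomial ideals\<close>

lemma keys_ideal_gen_monomials:
  assumes "f \<in> ideal_gen V ((\<lambda>m. Poly_Mapping.single m 1) ` G)" "t \<in> Poly_Mapping.keys f"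
  obtains m a where "m \<in> G" "t = a + m"
proof -
  obtain G' c where f: "f = (\<Sum>h\<in>G'. c h * h)"
    and G': "G' \<subseteq> (\<lambda>m. Poly_Mapping.single m 1) ` G"
    using assms(1) unfolding ideal_gen_def by blast
  obtain h where "h \<in> G'" "t \<in> Poly_Mapping.keys (c h * h)"
    using assms(2) keys_sum[of "\<lambda>h. c h * h" G'] unfolding f by blast
  moreover obtain a b where "t = a + b" "b \<in> Poly_Mapping.keys h"
    using keys_mult calculation(2) by blast
  ultimately show thesis
    using G' that by auto
qed

lemma monomial_mem_ideal_gen:
  assumes "m \<in> G"
  shows "Poly_Mapping.single m 1 \<in> ideal_gen V ((\<lambda>m. Poly_Mapping.single m (1::'k::field)) ` G)"
  unfolding ideal_gen_def using assms
  by (intro CollectI exI[of _ "{Poly_Mapping.single m 1}"] exI[of _ "\<lambda>_. 1"])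
    (simp add: polyring_def)

locale linear_presentation =
  fixes V :: "'v set" and I :: "('v, 'k::field) mpoly set"
    and d b0 b1 :: nat and g :: "nat \<Rightarrow> ('v, 'k) mpoly"
    and M :: "nat \<Rightarrow> nat \<Rightarrow> ('v, 'k) mpoly"
  assumes gens_polyring: "j < b0 \<Longrightarrow> g j \<in> polyring V"
    and gens_homog: "j < b0 \<Longrightarrow> homog d (g j)"
    and generates: "{\<Sum>j<b0. v j * g j | v. v \<in> fvecs V b0} = I"
    and syzygies_linear: "homog 1 (M j k)"
    and syzygies_exact: "{v \<in> fvecs V b0. (\<Sum>j<b0. v j * g j) = 0}
        = (\<lambda>w j. if j < b0 then matmul b1 M w j else 0) ` fvecs V b1"

lemma has_linear_resolution_imp_linear_presentation:
  fixes V :: "'v set" and I :: "('v, 'k::field) mpoly set"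
  assumes "has_linear_resolution V I"
  obtains d b0 b1 g M where "linear_presentation V I d b0 b1 g M"
proof -
  obtain d and b :: "nat \<Rightarrow> nat" and g and M :: "nat \<Rightarrow> nat \<Rightarrow> nat \<Rightarrow> ('v, 'k) mpoly"
    where gens: "\<forall>j<b 0. g j \<in> polyring V \<and> homog d (g j)"
      and generates: "{\<Sum>j<b 0. v j * g j | v. v \<in> fvecs V (b 0)} = I"
      and linear: "\<forall>i\<ge>1. \<forall>j k. M i j k \<in> polyring V \<and> homog 1 (M i j k)"
      and exact: "{v \<in> fvecs V (b 0). (\<Sum>j<b 0. v j * g j) = 0}
        = (\<lambda>w j. if j < b 0 then matmul (b 1) (M 1) w j else 0) ` fvecs V (b 1)"
    using assms unfolding has_linear_resolution_def by (elim exE conjE) (rule that)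
  have "homog 1 (M 1 j k)" for j k
    using linear by simp
  then have "linear_presentation V I d (b 0) (b 1) g (M 1)"
    by unfold_locales (simp_all add: gens generates exact)
  then show thesis by (rule that)
qed

lemma unit_vec_mem_fvecs:
  "k < b \<Longrightarrow> (\<lambda>j. if j = k then 1 else 0) \<in> fvecs V b"
  by (simp add: fvecs_def polyring_def)

lemma sum_unit_vec_mult:
  fixes f :: "nat \<Rightarrow> 'a::semiring_1"
  shows "k < b \<Longrightarrow> (\<Sum>j<b. (if j = k then 1 else 0) * f j) = f k"
  by (simp add: if_distrib[of "\<lambda>x. x * _"] cong: if_cong)

context linear_presentation
begin

lemma gen_mem_ideal:
  assumes "j < b0"
  shows "g j \<in> I"
  unfolding generates[symmetric] using assms
  by (intro CollectI exI[of _ "\<lambda>i. if i = j then 1 else 0"] conjI unit_vec_mem_fvecs)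
    (simp_all add: sum_unit_vec_mult)

lemma ideal_memE:
  assumes "f \<in> I"
  obtains v where "v \<in> fvecs V b0" "f = (\<Sum>j<b0. v j * g j)"
  using assms unfolding generates[symmetric] by blast

lemma syzygy_entryE:
  assumes "v \<in> fvecs V b0" "(\<Sum>j<b0. v j * g j) = 0" "j < b0"
  obtains w where "v j = (\<Sum>k<b1. M j k * w k)"
proof -
  have "v \<in> (\<lambda>w j. if j < b0 then matmul b1 M w j else 0) ` fvecs V b1"
    unfolding syzygies_exact[symmetric] using assms(1,2) by simp
  then obtain w where "v = (\<lambda>j. if j < b0 then matmul b1 M w j else 0)"
    by blast
  then have "v j = (\<Sum>k<b1. M j k * w k)"
    using assms(3) by (simp add: matmul_def)
  then show thesis by (rule that)
qed

lemma constant_syzygy_eq_0: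
  assumes "(\<Sum>j<b0. Poly_Mapping.single 0 (\<alpha> j) * g j) = 0" "j < b0"
  shows "\<alpha> j = 0"
proof -
  let ?v = "\<lambda>j. if j < b0 then Poly_Mapping.single 0 (\<alpha> j) else 0"
  have "?v \<in> fvecs V b0"
    by (simp add: fvecs_def polyring_def)
  moreover have "(\<Sum>j<b0. ?v j * g j) = 0"
    using assms(1) by simp
  ultimately obtain w where "?v j = (\<Sum>k<b1. M j k * w k)"
    using assms(2) by (rule syzygy_entryE)
  then have "\<alpha> j = (\<Sum>k<b1. Poly_Mapping.lookup (M j k * w k) 0)"
    using assms(2) by (metis lookup_single_eq lookup_sum)
  also have "\<dots> = 0"
    using lookup_homog_mult_0[OF syzygies_linear] by simp
  finally show ?thesis .
qed

lemma syzygy_column: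
  assumes "k < b1"
  shows "(\<Sum>j<b0. M j k * g j) = 0"
proof -
  let ?e = "\<lambda>k'. if k' = k then 1 else 0"
  have "matmul b1 M ?e j = M j k" for j
    unfolding matmul_def using assms by (simp add: mult.commute[of "M _ _"] sum_unit_vec_mult)
  moreover have "(\<lambda>j. if j < b0 then matmul b1 M ?e j else 0)
      \<in> {v \<in> fvecs V b0. (\<Sum>j<b0. v j * g j) = 0}"
    unfolding syzygies_exact by (rule imageI[OF unit_vec_mem_fvecs[OF assms]])
  ultimately show ?thesis by simp
qed

lemma gen_eq_0_if_no_linear_syzygies:
  assumes no_lin: "\<And>c j. (\<And>j. j < b0 \<Longrightarrow> homog 1 (c j)) \<Longrightarrow> (\<Sum>j<b0. c j * g j) = 0
      \<Longrightarrow> j < b0 \<Longrightarrow> c j = 0"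
    and jk: "j < b0" "k < b0" "j \<noteq> k"
  shows "g k = 0"
proof -
  define koszul where "koszul i = (if i = j then g k else if i = k then - g j else 0)" for i
  have "koszul \<in> fvecs V b0"
    using jk gens_polyring by (auto simp: fvecs_def koszul_def polyring_def)
  moreover have "(\<Sum>i<b0. koszul i * g i) = (\<Sum>i\<in>{j, k}. koszul i * g i)"
    using jk by (intro sum.mono_neutral_right) (auto simp: koszul_def)
  then have "(\<Sum>i<b0. koszul i * g i) = 0"
    using jk by (simp add: koszul_def mult.commute)
  ultimately obtain w where "koszul j = (\<Sum>k'<b1. M j k' * w k')"
    using jk(1) by (rule syzygy_entryE)
  moreover have "M j k' = 0" if "k' < b1" for k'
    using syzygies_linear syzygy_column[OF that] jk(1) by (rule no_lin[of "\<lambda>i. M i k'"])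
  ultimately show ?thesis
    by (simp add: koszul_def)
qed

end

section \<open>Equigenerated monomial ideals without linear syzygies\<close>

(* With truncated subtraction, m - m' is the exponent vector of lcm(m, m') / m'; for generators
   of equal degree the second assumption says that no two of them are joined by a linear syzygy. *)
locale separated_monomials =
  fixes G :: "('v \<Rightarrow>\<^sub>0 nat) set" and n :: nat
  assumes mdeg_gens: "m \<in> G \<Longrightarrow> mdeg m = n"
    and no_linear_syzygy: "m \<in> G \<Longrightarrow> m' \<in> G \<Longrightarrow> m \<noteq> m' \<Longrightarrow> 2 \<le> mdeg (m - m')"
begin

lemma lookup_mult_at_gen:
  fixes v h :: "('v, 'k::field) mpoly"
  assumes "Poly_Mapping.keys h \<subseteq> G" "m \<in> G"
  shows "Poly_Mapping.lookup (v * h) m = Poly_Mapping.lookup v 0 * Poly_Mapping.lookup h m"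
proof -
  have "Poly_Mapping.lookup (v * h) (0 + m) = Poly_Mapping.lookup v 0 * Poly_Mapping.lookup h m"
  proof (rule lookup_mult_unique)
    fix a b
    assume b: "b \<in> Poly_Mapping.keys h" and eq: "a + b = 0 + m"
    have "mdeg a + mdeg b = mdeg m"
      using arg_cong[OF eq, of mdeg] by simp
    moreover have "mdeg b = mdeg m"
      using assms b mdeg_gens by blast
    ultimately have "a = 0"
      by simp
    then show "a = 0 \<and> b = m"
      using eq by simp
  qed
  then show ?thesis by simp
qed

lemma lookup_mult_at_shifted_gen:
  fixes c h :: "('v, 'k::field) mpoly"
  assumes "homog 1 c" "Poly_Mapping.keys h \<subseteq> G" "m \<in> G"
  shows "Poly_Mapping.lookup (c * h) (e + m) = Poly_Mapping.lookup c e * Poly_Mapping.lookup h m"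
proof (rule lookup_mult_unique)
  fix a b
  assume a: "a \<in> Poly_Mapping.keys c" and b: "b \<in> Poly_Mapping.keys h"
    and eq: "a + b = e + m"
  have "mdeg (m - b) \<le> 1"
    using mdeg_diff_le_if_add_eq[OF eq] a assms(1) by (simp add: homog_def)
  moreover have "b \<in> G"
    using assms(2) b by blast
  ultimately have "b = m"
    using no_linear_syzygy[OF assms(3)] by fastforce
  then show "a = e \<and> b = m"
    using eq by simp
qed

end

locale monomial_linear_presentation =
  separated_monomials G n +
  linear_presentation V "ideal_gen V ((\<lambda>m. Poly_Mapping.single m 1) ` G)" d b0 b1 g M
  for G n V d b0 b1 g M
begin

lemma gen_degree_le:
  assumes "m \<in> G"
  shows "d \<le> n"
proof -
  obtain v where v: "Poly_Mapping.single m 1 = (\<Sum>j<b0. v j * g j)"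
    using ideal_memE[OF monomial_mem_ideal_gen[OF assms]] by metis
  have "m \<in> Poly_Mapping.keys (\<Sum>j<b0. v j * g j)"
    unfolding v[symmetric] by simp
  then obtain j where j: "j < b0" "m \<in> Poly_Mapping.keys (v j * g j)"
    using keys_sum[of "\<lambda>j. v j * g j" "{..<b0}"] by blast
  then obtain a t where at: "m = a + t" "t \<in> Poly_Mapping.keys (g j)"
    using keys_mult[of "v j" "g j"] by blast
  have "mdeg t = d"
    using gens_homog[OF j(1)] at(2) by (simp add: homog_def)
  moreover have "mdeg a + mdeg t = n"
    using arg_cong[OF at(1), of mdeg] mdeg_gens[OF assms] by simp
  ultimately show ?thesis
    by linarith
qed

lemma keys_gen_subset:
  assumes "j < b0"
  shows "Poly_Mapping.keys (g j) \<subseteq> G"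
proof
  fix t
  assume t: "t \<in> Poly_Mapping.keys (g j)"
  obtain m a where m: "m \<in> G" "t = a + m"
    using gen_mem_ideal[OF assms] t by (rule keys_ideal_gen_monomials)
  have "mdeg t = d"
    using gens_homog[OF assms] t by (simp add: homog_def)
  then have "mdeg a + n = d"
    using m mdeg_gens by simp
  then have "mdeg a = 0"
    using gen_degree_le[OF m(1)] by linarith
  then show "t \<in> G"
    using m by simp
qed

lemma linear_syzygy_coeff:
  assumes c: "\<And>j. j < b0 \<Longrightarrow> homog 1 (c j)" and syz: "(\<Sum>j<b0. c j * g j) = 0"
  shows "(\<Sum>j<b0. Poly_Mapping.single 0 (Poly_Mapping.lookup (c j) e) * g j) = 0" (is "?s = 0")
proof (rule poly_mapping_eqI)
  fix t
  have "Poly_Mapping.lookup ?s t = (\<Sum>j<b0. Poly_Mapping.lookup (c j) e * Poly_Mapping.lookup (g j) t)"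
    by (simp add: lookup_sum lookup_single_0_mult)
  also have "\<dots> = 0"
  proof (cases "t \<in> G")
    case True
    then have "(\<Sum>j<b0. Poly_Mapping.lookup (c j) e * Poly_Mapping.lookup (g j) t)
        = Poly_Mapping.lookup (\<Sum>j<b0. c j * g j) (e + t)"
      using lookup_mult_at_shifted_gen[OF c keys_gen_subset] by (simp add: lookup_sum)
    then show ?thesis
      using syz by simp
  next
    case False
    then have "Poly_Mapping.lookup (g j) t = 0" if "j < b0" for j
      using keys_gen_subset[OF that] by (metis in_keys_iff subsetD)
    then show ?thesis
      by simp
  qed
  finally show "Poly_Mapping.lookup ?s t = Poly_Mapping.lookup 0 t"
    by simp
qed

lemma linear_syzygy_eq_0:
  assumes "\<And>j. j < b0 \<Longrightarrow> homog 1 (c j)" "(\<Sum>j<b0. c j * g j) = 0" "j < b0"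
  shows "c j = 0"
proof (rule poly_mapping_eqI)
  fix e
  show "Poly_Mapping.lookup (c j) e = Poly_Mapping.lookup 0 e"
    using constant_syzygy_eq_0[OF linear_syzygy_coeff[OF assms(1,2)] assms(3)] by simp
qed

lemma one_generator:
  assumes "m \<in> G"
  shows "b0 = 1"
proof (rule ccontr)
  assume "b0 \<noteq> 1"
  have "g k = 0" if "k < b0" for k
  proof (rule gen_eq_0_if_no_linear_syzygies[where j = "if k = 0 then 1 else 0"])
    show "c j = 0"
      if "\<And>j. j < b0 \<Longrightarrow> homog 1 (c j)" "(\<Sum>j<b0. c j * g j) = 0" "j < b0" for c j
      using that by (rule linear_syzygy_eq_0)
  qed (use that \<open>b0 \<noteq> 1\<close> in auto)
  moreover obtain v where v: "Poly_Mapping.single m 1 = (\<Sum>j<b0. v j * g j)"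
    using ideal_memE[OF monomial_mem_ideal_gen[OF assms]] by metis
  ultimately have "(\<Sum>j<b0. v j * g j) = 0"
    by simp
  with v show False
    by (metis lookup_single_eq lookup_zero one_neq_zero)
qed

lemma gens_eq:
  assumes "m \<in> G" "m' \<in> G"
  shows "m = m'"
proof (rule ccontr)
  assume "m \<noteq> m'"
  have b0: "b0 = 1"
    using one_generator[OF assms(1)] .
  have keys: "Poly_Mapping.keys (g 0) \<subseteq> G"
    using keys_gen_subset b0 by simp
  have principal: "\<exists>v. Poly_Mapping.single m 1 = v * g 0" if m: "m \<in> G" for m
  proof -
    obtain v where "Poly_Mapping.single m 1 = (\<Sum>j<b0. v j * g j)"
      using ideal_memE[OF monomial_mem_ideal_gen[OF m]] by metis
    then show ?thesis
      using b0 by auto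
  qed
  obtain v v' where v: "Poly_Mapping.single m 1 = v * g 0"
    and v': "Poly_Mapping.single m' 1 = v' * g 0"
    using principal assms by metis
  have "Poly_Mapping.lookup v 0 * Poly_Mapping.lookup (g 0) m' = 0"
    using arg_cong[OF v, of "\<lambda>f. Poly_Mapping.lookup f m'"] lookup_mult_at_gen[OF keys assms(2)]
      \<open>m \<noteq> m'\<close> by (simp add: lookup_single)
  moreover have "Poly_Mapping.lookup v 0 * Poly_Mapping.lookup (g 0) m = 1"
    using arg_cong[OF v, of "\<lambda>f. Poly_Mapping.lookup f m"] lookup_mult_at_gen[OF keys assms(1)]
    by simp
  moreover have "Poly_Mapping.lookup v' 0 * Poly_Mapping.lookup (g 0) m' = 1"
    using arg_cong[OF v', of "\<lambda>f. Poly_Mapping.lookup f m'"] lookup_mult_at_gen[OF keys assms(2)]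
    by simp
  ultimately show False
    by auto
qed

end

theorem no_linear_resolution_if_no_linear_syzygies:
  fixes G :: "('v \<Rightarrow>\<^sub>0 nat) set"
  assumes "\<And>m. m \<in> G \<Longrightarrow> mdeg m = n"
    and "\<And>m m'. m \<in> G \<Longrightarrow> m' \<in> G \<Longrightarrow> m \<noteq> m' \<Longrightarrow> 2 \<le> mdeg (m - m')"
    and "m \<in> G" "m' \<in> G" "m \<noteq> m'"
  shows "\<not> has_linear_resolution V (ideal_gen V ((\<lambda>m. Poly_Mapping.single m (1::'k::field)) ` G))"
proof
  let ?I = "ideal_gen V ((\<lambda>m. Poly_Mapping.single m (1::'k)) ` G)"
  assume "has_linear_resolution V ?I"
  then obtain d b0 b1 g M where "linear_presentation V ?I d b0 b1 g M"
    by (rule has_linear_resolution_imp_linear_presentation)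
  moreover have "separated_monomials G n"
    using assms(1,2) by unfold_locales
  ultimately interpret monomial_linear_presentation G n V d b0 b1 g M
    by (intro monomial_linear_presentation.intro)
  show False
    using gens_eq assms(3-5) by blast
qed

section \<open>The ideals generated by the monomials u_q\<close>

definition u_exp :: "'a::{finite,order} \<Rightarrow> ('a + 'a) \<Rightarrow>\<^sub>0 nat" where
  "u_exp q = (\<Sum>p\<in>lideal q. Poly_Mapping.single (Inl p) 1)
    + (\<Sum>p\<in>join_irr - lideal q. Poly_Mapping.single (Inr p) 1)"

lemma prod_Var_eq_single:
  "finite A \<Longrightarrow> (\<Prod>p\<in>A. Var (f p) :: ('v, 'k::field) mpoly)
    = Poly_Mapping.single (\<Sum>p\<in>A. Poly_Mapping.single (f p) 1) 1"
  by (induction A rule: finite_induct) (simp_all add: Var_def mult_single)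

lemma u_mon_eq_single:
  "(u_mon q :: ('a::{finite,order} + 'a, 'k::field) mpoly) = Poly_Mapping.single (u_exp q) 1"
  unfolding u_mon_def u_exp_def by (simp add: prod_Var_eq_single mult_single)

lemma lookup_u_exp_Inl:
  "Poly_Mapping.lookup (u_exp q) (Inl r) = (if r \<in> lideal q then 1 else 0)"
  by (simp add: u_exp_def lookup_add lookup_sum lookup_single when_def)

lemma lookup_u_exp_Inr:
  "Poly_Mapping.lookup (u_exp q) (Inr r) = (if r \<in> join_irr - lideal q then 1 else 0)"
  by (simp add: u_exp_def lookup_add lookup_sum lookup_single when_def)

lemma mdeg_u_exp: "mdeg (u_exp (q::'a::{finite,order})) = card (join_irr :: 'a set)"
proof -
  have "lideal q \<subseteq> join_irr"
    by (auto simp: lideal_def)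
  then show ?thesis
    unfolding u_exp_def by (simp add: mdeg_sum card_Diff_subset card_mono)
qed

lemma u_exp_no_linear_syzygy:
  fixes q q' :: "'a::{finite,lattice}"
  assumes "lrank q = lrank q'" "q \<noteq> q'"
  shows "2 \<le> mdeg (u_exp q - u_exp q')"
proof -
  obtain x where x: "x \<in> lideal q" "x \<notin> lideal q'"
    using lideal_not_subset_if_same_rank[OF assms] by blast
  obtain y where y: "y \<in> lideal q'" "y \<notin> lideal q"
    using lideal_not_subset_if_same_rank[OF assms(1)[symmetric] assms(2)[symmetric]] by blast
  have "y \<in> join_irr"
    using y(1) by (simp add: lideal_def)
  then have "Poly_Mapping.lookup (u_exp q - u_exp q') (Inl x)
      + Poly_Mapping.lookup (u_exp q - u_exp q') (Inr y) = 2"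
    using x y by (simp add: lookup_minus lookup_u_exp_Inl lookup_u_exp_Inr)
  then show ?thesis
    using lookup_add_lookup_le_mdeg[of "Inl x" "Inr y" "u_exp q - u_exp q'"] by simp
qed

lemma H_ideal_eq_ideal_gen:
  "(H_ideal T :: ('a::{finite,order} + 'a, 'k::field) mpoly set)
     = ideal_gen Svars ((\<lambda>m. Poly_Mapping.single m 1) ` u_exp ` T)"
  unfolding H_ideal_def by (simp add: u_mon_eq_single image_image)

theorem corollary3p15:
  fixes i :: int
  assumes "card {p :: 'a::{finite,distrib_lattice}. int (lrank p) = i} > 1"
  shows "\<not> has_linear_resolution (Svars :: ('a + 'a) set)
            (H_ideal {p :: 'a. int (lrank p) = i} :: ('a + 'a, 'k::field) mpoly set)"
proof -
  let ?T = "{p :: 'a. int (lrank p) = i}"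
  have "\<not> (\<forall>p\<in>?T. \<forall>p'\<in>?T. p = p')"
    using assms card_le_Suc0_iff_eq[of ?T] by simp
  then obtain p p' where p: "p \<in> ?T" "p' \<in> ?T" "p \<noteq> p'"
    by blast
  have degree: "mdeg m = card (join_irr :: 'a set)" if "m \<in> u_exp ` ?T" for m
    using that mdeg_u_exp by auto
  have separated: "2 \<le> mdeg (m - m')"
    if "m \<in> u_exp ` ?T" "m' \<in> u_exp ` ?T" "m \<noteq> m'" for m m'
    using that by (auto intro!: u_exp_no_linear_syzygy)
  have "u_exp p \<noteq> u_exp p'"
    using u_exp_no_linear_syzygy[of p p'] p by auto
  then show ?thesis
    unfolding H_ideal_eq_ideal_gen using p
    by (intro no_linear_resolution_if_no_linear_syzygies[OF degree separated,
          where m = "u_exp p" and m' = "u_exp p'"]) auto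
qed

end
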